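(* There exists a constant $\kappa>0$, independent of $r$ and of $s$, such that for every integer $r\ge1$ and every word $s^{(r)}=s_1\dots s_r\in\mathcal A^r$ with $p(s^{(r)})>0$, the generating function $\Phi(s^{(r)},t)=\mathbb E[t^{Y}]$ of the waiting time $Y=\min\{n\ge r: (U_n,U_{n-1},\dots,U_{n-r+1})=(s_1,\dots,s_r)\}$ has radius of convergence at least $1+\kappa\,p(s^{(r)})$.
   Context: Alphabet $\mathcal A=\{A,C,G,T\}$. $U=(U_n)_{n\ge1}$ is a stationary Markov chain of order 1 on $\mathcal A$ with transition matrix $Q$ (irreducible and aperiodic) started from its invariant measure $p$ (so $p(u)>0$ for all $u$). $p(s^{(r)}):=\mathbb P(U_1=s_r,U_2=s_{r-1},\dots,U_r=s_1)$. *)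

theory Defs
  imports "HOL-Analysis.Analysis"
begin

datatype nucl = A | C | G | T

lemma UNIV_nucl: "(UNIV :: nucl set) = {A, C, G, T}"
  using nucl.exhaust by auto

instance nucl :: finite
  by standard (simp add: UNIV_nucl)

fun mpow :: "(nucl \<Rightarrow> nucl \<Rightarrow> real) \<Rightarrow> nat \<Rightarrow> nucl \<Rightarrow> nucl \<Rightarrow> real" where
  "mpow Q 0 u v = (if u = v then 1 else 0)"
| "mpow Q (Suc n) u v = (\<Sum>w\<in>UNIV. mpow Q n u w * Q w v)"

definition stochastic :: "(nucl \<Rightarrow> nucl \<Rightarrow> real) \<Rightarrow> bool" where
  "stochastic Q \<longleftrightarrow> (\<forall>u v. Q u v \<ge> 0) \<and> (\<forall>u. (\<Sum>v\<in>UNIV. Q u v) = 1)"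

definition irreducible_chain :: "(nucl \<Rightarrow> nucl \<Rightarrow> real) \<Rightarrow> bool" where
  "irreducible_chain Q \<longleftrightarrow> (\<forall>u v. \<exists>n. mpow Q n u v > 0)"

definition period :: "(nucl \<Rightarrow> nucl \<Rightarrow> real) \<Rightarrow> nucl \<Rightarrow> nat" where
  "period Q u = Gcd {n. n \<ge> 1 \<and> mpow Q n u u > 0}"

definition aperiodic_chain :: "(nucl \<Rightarrow> nucl \<Rightarrow> real) \<Rightarrow> bool" where
  "aperiodic_chain Q \<longleftrightarrow> (\<forall>u. period Q u = 1)"

definition invariant_measure :: "(nucl \<Rightarrow> nucl \<Rightarrow> real) \<Rightarrow> (nucl \<Rightarrow> real) \<Rightarrow> bool" where
  "invariant_measure Q p \<longleftrightarrow> (\<forall>u. p u \<ge> 0) \<and> (\<Sum>u\<in>UNIV. p u) = 1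
      \<and> (\<forall>v. (\<Sum>u\<in>UNIV. p u * Q u v) = p v)"

fun trans_prod :: "(nucl \<Rightarrow> nucl \<Rightarrow> real) \<Rightarrow> nucl \<Rightarrow> nucl list \<Rightarrow> real" where
  "trans_prod Q x [] = 1"
| "trans_prod Q x (y # ys) = Q x y * trans_prod Q y ys"

text \<open>path_prob p Q [w1,...,wn] = P(U_1 = w1, ..., U_n = wn).\<close>
fun path_prob :: "(nucl \<Rightarrow> real) \<Rightarrow> (nucl \<Rightarrow> nucl \<Rightarrow> real) \<Rightarrow> nucl list \<Rightarrow> real" where
  "path_prob p Q [] = 1"
| "path_prob p Q (x # xs) = p x * trans_prod Q x xs"

text \<open>For a word s = [s_1,...,s_r], p(s^(r)) = P(U_1=s_r, ..., U_r=s_1).\<close>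
definition word_prob :: "(nucl \<Rightarrow> real) \<Rightarrow> (nucl \<Rightarrow> nucl \<Rightarrow> real) \<Rightarrow> nucl list \<Rightarrow> real" where
  "word_prob p Q s = path_prob p Q (rev s)"

text \<open>The path [U_1,...,U_n] satisfies (U_n,...,U_{n-r+1}) = (s_1,...,s_r) with n >= r.\<close>
definition ends_with_word :: "nucl list \<Rightarrow> nucl list \<Rightarrow> bool" where
  "ends_with_word s w \<longleftrightarrow> length w \<ge> length s \<and> drop (length w - length s) w = rev s"

text \<open>P(Y = n), Y = min{n >= r : (U_n,...,U_{n-r+1}) = (s_1,...,s_r)}.\<close>
definition waiting_prob :: "(nucl \<Rightarrow> real) \<Rightarrow> (nucl \<Rightarrow> nucl \<Rightarrow> real) \<Rightarrow> nucl list \<Rightarrow> nat \<Rightarrow> real" where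
  "waiting_prob p Q s n =
     (\<Sum>w\<in>{w. length w = n \<and> ends_with_word s w \<and> (\<forall>m<n. \<not> ends_with_word s (take m w))}.
        path_prob p Q w)"

end

theory Submission
  imports Defs "HOL-Library.Sublist"
begin

text \<open>
  Write w for the target word in the order in which the chain produces it (w = rev s), r for its
  length and T for the probability of producing w after its first letter, so that
  p(s) = p(hd w) T \<le> T. Cut the path into blocks of length r + M with M \<approx> 1/T. Started anywhere,
  a block contains an occurrence of w with probability at least some \<delta> > 0 that depends on Q
  alone; this is a second moment argument for the number X of occurrences starting in the first M
  positions. Recurrence of the chain gives E X \<ge> \<epsilon>/2, and E X^2 \<le> B E X with B bounded
  independently of w: a non-overlapping pair of occurrences costs a factor T, an overlapping one at
  distance d forces d letters of w and costs \<theta>^(d div 4) with \<theta> < 1, because irreducibility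
  and aperiodicity on four letters rule out four consecutive transitions of probability 1.
  Hence P(Y > n) decays like (1 - \<delta>)^(n/(r + M)), the radius of convergence is at least
  1 + \<delta>/(r + M), and both r T and M T are bounded in terms of Q only.
\<close>

definition words :: "nat \<Rightarrow> 'a list set" where
  "words n = {w. length w = n}"

lemma finite_words [simp]: "finite (words n :: 'a::finite list set)"
  unfolding words_def using finite_lists_length_eq[of "UNIV :: 'a set" n] by simp

lemma words_0 [simp]: "words 0 = {[]}"
  by (auto simp: words_def)

lemma words_add: "words (n + m) = (\<lambda>(u, v). u @ v) ` (words n \<times> words m)"
proof
  show "words (n + m) \<subseteq> (\<lambda>(u, v). u @ v) ` (words n \<times> words m)"
  proof
    fix w assume "w \<in> words (n + m)"
    then show "w \<in> (\<lambda>(u, v). u @ v) ` (words n \<times> words m)"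
      unfolding words_def by (intro image_eqI[of _ _ "(take n w, drop n w)"]) auto
  qed
qed (auto simp: words_def)

lemma sum_words_add:
  "(\<Sum>w\<in>words (n + m). f w) = (\<Sum>u\<in>words n. \<Sum>v\<in>words m. f (u @ v))"
proof -
  have "inj_on (\<lambda>(u, v). u @ v) (words n \<times> words m)"
    by (auto simp: inj_on_def words_def)
  then have "(\<Sum>w\<in>words (n + m). f w) = (\<Sum>x\<in>words n \<times> words m. f (case x of (u, v) \<Rightarrow> u @ v))"
    unfolding words_add by (rule sum.reindex[unfolded comp_def])
  also have "\<dots> = (\<Sum>u\<in>words n. \<Sum>v\<in>words m. f (u @ v))"
    unfolding sum.cartesian_product by (rule sum.cong) auto
  finally show ?thesis .
qed

lemma sum_words_Suc:
  "(\<Sum>w\<in>words (Suc n). f w) = (\<Sum>a\<in>UNIV. \<Sum>v\<in>words n. f (a # v))"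
proof -
  have words_Suc: "words (Suc n) = (\<lambda>(a, v). a # v) ` (UNIV \<times> words n)"
    by (auto simp: words_def length_Suc_conv)
  have "inj_on (\<lambda>(a, v). a # v) (UNIV \<times> words n)"
    by (auto simp: inj_on_def)
  then have "(\<Sum>w\<in>words (Suc n). f w) = (\<Sum>x\<in>UNIV \<times> words n. f (case x of (a, v) \<Rightarrow> a # v))"
    unfolding words_Suc by (rule sum.reindex[unfolded comp_def])
  also have "\<dots> = (\<Sum>a\<in>UNIV. \<Sum>v\<in>words n. f (a # v))"
    unfolding sum.cartesian_product by (rule sum.cong) auto
  finally show ?thesis .
qed

lemma sum_words_indicator:
  fixes f :: "'a::finite list \<Rightarrow> real"
  assumes "length u = n"
  shows "(\<Sum>w\<in>words n. f w * of_bool (w = u)) = f u"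
proof -
  have "(\<Sum>w\<in>words n. f w * of_bool (w = u)) = (\<Sum>w\<in>words n. if w = u then f u else 0)"
    by (intro sum.cong) auto
  also have "\<dots> = f u"
    using assms by (simp add: sum.delta[OF finite_words]) (simp add: words_def)
  finally show ?thesis .
qed

lemma trans_prod_append:
  "trans_prod Q x (u @ v) = trans_prod Q x u * trans_prod Q (last (x # u)) v"
  by (induction u arbitrary: x) auto

lemma sum_trans_prod_append:
  "(\<Sum>v\<in>words (n + m). trans_prod Q x v * f v)
     = (\<Sum>u\<in>words n. trans_prod Q x u * (\<Sum>v\<in>words m. trans_prod Q (last (x # u)) v * f (u @ v)))"
  by (simp add: sum_words_add trans_prod_append sum_distrib_left mult.assoc)

lemma mpow_add: "mpow Q (m + n) x y = (\<Sum>z\<in>UNIV. mpow Q m x z * mpow Q n z y)"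
proof (induction n arbitrary: y)
  case 0
  have "(\<Sum>z\<in>UNIV. mpow Q m x z * mpow Q 0 z y) = (\<Sum>z\<in>UNIV. if z = y then mpow Q m x y else 0)"
    by (intro sum.cong) auto
  then show ?case by simp
next
  case (Suc n)
  then show ?case
    by (simp add: sum_distrib_left sum_distrib_right mult.assoc) (rule sum.swap)
qed

lemma sum_trans_prod_last:
  "(\<Sum>u\<in>words k. trans_prod Q x u * h (last (x # u))) = (\<Sum>y\<in>UNIV. mpow Q k x y * h y)"
proof (induction k arbitrary: h)
  case 0
  have "(\<Sum>y\<in>UNIV. mpow Q 0 x y * h y) = (\<Sum>y\<in>UNIV. if y = x then h x else 0)"
    by (intro sum.cong) auto
  then show ?case by simp
next
  case (Suc k)
  have "(\<Sum>u\<in>words (Suc k). trans_prod Q x u * h (last (x # u)))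
      = (\<Sum>u\<in>words k. trans_prod Q x u * (\<Sum>a\<in>UNIV. Q (last (x # u)) a * h a))"
    unfolding Suc_eq_plus1 sum_trans_prod_append by (simp add: sum_words_Suc sum_distrib_left)
  also have "\<dots> = (\<Sum>y\<in>UNIV. mpow Q k x y * (\<Sum>a\<in>UNIV. Q y a * h a))"
    by (rule Suc.IH)
  also have "\<dots> = (\<Sum>a\<in>UNIV. mpow Q (Suc k) x a * h a)"
    by (simp add: sum_distrib_left sum_distrib_right mult.assoc) (rule sum.swap)
  finally show ?case .
qed

locale transition_matrix =
  fixes Q :: "nucl \<Rightarrow> nucl \<Rightarrow> real"
  assumes stochastic: "stochastic Q"
begin

lemma nonneg: "0 \<le> Q u v"
  and row_sum: "(\<Sum>v\<in>UNIV. Q u v) = 1"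
  using stochastic by (auto simp: stochastic_def)

lemma le_1: "Q u v \<le> 1"
  using member_le_sum[of v UNIV "Q u"] nonneg row_sum by simp

lemma eq_0_if_eq_1:
  assumes "Q u v = 1" and "v' \<noteq> v"
  shows "Q u v' = 0"
proof -
  have "(\<Sum>x\<in>{v, v'}. Q u x) \<le> (\<Sum>x\<in>UNIV. Q u x)"
    by (rule sum_mono2) (auto simp: nonneg)
  then show ?thesis
    using assms nonneg[of u v'] row_sum[of u] by simp
qed

lemma trans_prod_nonneg: "0 \<le> trans_prod Q x u"
  by (induction u arbitrary: x) (auto simp: nonneg)

lemma trans_prod_le_1: "trans_prod Q x u \<le> 1"
  by (induction u arbitrary: x) (auto simp: nonneg le_1 trans_prod_nonneg intro: mult_le_one)

lemma trans_prod_le_step: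
  assumes "k < length u"
  shows "trans_prod Q x u \<le> Q ((x # u) ! k) (u ! k)"
  using assms
proof (induction u arbitrary: x k)
  case (Cons a u)
  show ?case
  proof (cases k)
    case 0
    then show ?thesis
      using mult_left_le[OF trans_prod_le_1 nonneg] by simp
  next
    case (Suc k')
    then have "trans_prod Q a u \<le> Q ((a # u) ! k') (u ! k')"
      using Cons by simp
    then show ?thesis
      using Suc order_trans[OF mult_left_le_one_le[OF trans_prod_nonneg nonneg le_1]] by simp
  qed
qed simp

lemma sum_trans_prod: "(\<Sum>v\<in>words n. trans_prod Q x v) = 1"
  by (induction n arbitrary: x) (simp_all add: sum_words_Suc sum_distrib_left[symmetric] row_sum)

lemma sum_trans_prod_prefix:
  "(\<Sum>v\<in>words (n + m). trans_prod Q x v * f (take n v)) = (\<Sum>u\<in>words n. trans_prod Q x u * f u)"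
  unfolding sum_trans_prod_append
  by (simp add: words_def sum_distrib_right[symmetric] sum_trans_prod[unfolded words_def])

lemma mpow_nonneg: "0 \<le> mpow Q n x y"
  by (induction n arbitrary: y) (auto intro!: sum_nonneg simp: nonneg)

lemma mpow_row_sum: "(\<Sum>y\<in>UNIV. mpow Q n x y) = 1"
proof (induction n)
  case (Suc n)
  have "(\<Sum>y\<in>UNIV. mpow Q (Suc n) x y) = (\<Sum>z\<in>UNIV. mpow Q n x z * (\<Sum>y\<in>UNIV. Q z y))"
    by (simp add: sum_distrib_left) (rule sum.swap)
  then show ?case
    by (simp add: row_sum Suc.IH)
qed simp

lemma mpow_le_1: "mpow Q n x y \<le> 1"
  using member_le_sum[of y UNIV "mpow Q n x"] mpow_nonneg mpow_row_sum by simp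

lemma mpow_add_ge: "mpow Q m x z * mpow Q n z y \<le> mpow Q (m + n) x y"
  unfolding mpow_add by (rule member_le_sum) (auto intro: mult_nonneg_nonneg mpow_nonneg)

lemma mpow_deterministic:
  assumes "\<And>n. Q (y n) (y (Suc n)) = 1"
  shows "mpow Q n (y 0) b = of_bool (b = y n)"
proof (induction n arbitrary: b)
  case (Suc n)
  have "mpow Q (Suc n) (y 0) b = (\<Sum>z\<in>UNIV. if z = y n then Q z b else 0)"
    unfolding mpow.simps Suc.IH by (intro sum.cong) auto
  also have "\<dots> = Q (y n) b"
    by simp
  finally show ?case
    using assms[of n] eq_0_if_eq_1[OF assms[of n], of b] by auto
qed simp

end

section \<open>Decay of path probabilities\<close>

lemma card_UNIV_nucl: "card (UNIV :: nucl set) = 4"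
  by (simp add: UNIV_nucl)

locale irreducible_transition_matrix = transition_matrix +
  assumes irreducible: "irreducible_chain Q"

locale ergodic_transition_matrix = irreducible_transition_matrix +
  assumes aperiodic: "aperiodic_chain Q"
begin

lemma no_deterministic_cycle:
  assumes det: "\<And>n. Q (y n) (y (Suc n)) = 1" and periodic: "\<And>n. y n = y (n mod c)"
    and "0 < c" and "c \<le> 4"
  shows False
proof -
  have "b \<in> y ` {..<c}" for b
  proof -
    obtain n where "0 < mpow Q n (y 0) b"
      using irreducible unfolding irreducible_chain_def by blast
    then have "b = y (n mod c)"
      using mpow_deterministic[where y = y, OF det] periodic by simp
    then show ?thesis
      using \<open>0 < c\<close> by auto
  qed
  then have onto: "y ` {..<c} = UNIV"
    by blast
  have "4 \<le> c"
    using card_image_le[of "{..<c}" y] onto by (simp add: card_UNIV_nucl)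
  then have "c = 4" and "card (y ` {..<c}) = card {..<c}"
    using \<open>c \<le> 4\<close> onto by (simp_all add: card_UNIV_nucl)
  then have inj: "inj_on y {..<4}"
    by (metis eq_card_imp_inj_on finite_lessThan)
  have "4 dvd n" if "0 < mpow Q n (y 0) (y 0)" for n
  proof -
    have "y (0 mod 4) = y (n mod 4)"
      using that mpow_deterministic[where y = y, OF det] periodic \<open>c = 4\<close> by simp
    then have "0 = n mod 4"
      using inj by (auto simp: inj_on_def)
    then show ?thesis
      by presburger
  qed
  then have "4 dvd period Q (y 0)"
    unfolding period_def by (intro Gcd_greatest) blast
  then show False
    using aperiodic by (simp add: aperiodic_chain_def)
qed

text \<open>
  Five states on a deterministic path repeat one, so the chain runs deterministically around a
  cycle of length at most 4; irreducibility makes the cycle visit all four letters, and then every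
  return time is a multiple of 4.
\<close>

lemma no_deterministic_path: "\<exists>k<4. Q (x k) (x (Suc k)) < 1"
proof (rule ccontr)
  assume "\<not> ?thesis"
  then have det: "Q (x k) (x (Suc k)) = 1" if "k < 4" for k
    using le_1 that by (meson not_le order_antisym)
  have "\<not> inj_on x {..4}"
    using card_inj_on_le[of x "{..4}" UNIV] by (auto simp: card_UNIV_nucl)
  then obtain i j where ij: "i < j" "j \<le> 4" "x i = x j"
    unfolding inj_on_def by (metis atMost_iff linorder_neqE_nat)
  define c where "c = j - i"
  define y where "y n = x (i + n mod c)" for n
  have "0 < c" "c \<le> 4"
    using ij by (auto simp: c_def)
  have "Q (y n) (y (Suc n)) = 1" for n
  proof -
    have "y (Suc n) = x (Suc (i + n mod c))"
    proof (cases "Suc (n mod c) = c")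
      case True
      then have "Suc (i + n mod c) = j"
        using ij by (simp add: c_def)
      then show ?thesis
        using True ij by (simp add: y_def mod_Suc)
    qed (simp add: y_def mod_Suc)
    moreover have "i + n mod c < 4"
      using mod_less_divisor[OF \<open>0 < c\<close>, of n] ij unfolding c_def by linarith
    ultimately show ?thesis
      using det by (simp add: y_def)
  qed
  moreover have "y n = y (n mod c)" for n
    by (simp add: y_def)
  ultimately show False
    using no_deterministic_cycle \<open>0 < c\<close> \<open>c \<le> 4\<close> by blast
qed

end

definition max_prob_lt_1 :: "(nucl \<Rightarrow> nucl \<Rightarrow> real) \<Rightarrow> real" where
  "max_prob_lt_1 Q = Max (insert 0 ((\<lambda>(u, v). if Q u v < 1 then Q u v else 0) ` UNIV))"

lemma max_prob_lt_1_lt_1: "max_prob_lt_1 Q < 1"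
proof -
  have "max_prob_lt_1 Q \<in> insert 0 ((\<lambda>(u, v). if Q u v < 1 then Q u v else 0) ` UNIV)"
    unfolding max_prob_lt_1_def by (rule Max_in) auto
  then show ?thesis
    by (auto split: if_splits)
qed

lemma max_prob_lt_1_nonneg: "0 \<le> max_prob_lt_1 Q"
  unfolding max_prob_lt_1_def by (rule Max_ge_iff[THEN iffD2]) auto

lemma le_max_prob_lt_1: "Q u v < 1 \<Longrightarrow> Q u v \<le> max_prob_lt_1 Q"
  unfolding max_prob_lt_1_def by (rule Max_ge_iff[THEN iffD2]) (auto intro!: bexI[of _ "(u, v)"])

context ergodic_transition_matrix
begin

abbreviation \<theta> :: real where
  "\<theta> \<equiv> max_prob_lt_1 Q"

lemma trans_prod_length_4_le: "length w = 4 \<Longrightarrow> trans_prod Q z w \<le> \<theta>"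
proof -
  assume "length w = 4"
  obtain k where "k < 4" and "Q ((z # w) ! k) ((z # w) ! Suc k) < 1"
    using no_deterministic_path[of "(!) (z # w)"] by blast
  then show ?thesis
    using trans_prod_le_step[of k w z] le_max_prob_lt_1 \<open>length w = 4\<close> by fastforce
qed

lemma trans_prod_le_power: "trans_prod Q z w \<le> \<theta> ^ (length w div 4)"
proof (induction "length w" arbitrary: z w rule: less_induct)
  case less
  show ?case
  proof (cases "length w < 4")
    case True
    then show ?thesis
      using trans_prod_le_1 by simp
  next
    case False
    have "trans_prod Q z w = trans_prod Q z (take 4 w) * trans_prod Q (last (z # take 4 w)) (drop 4 w)"
      by (subst trans_prod_append[symmetric]) simp
    also have "\<dots> \<le> \<theta> * \<theta> ^ (length (drop 4 w) div 4)"
      using False less[of "drop 4 w"] trans_prod_length_4_le[of "take 4 w"]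
      by (intro mult_mono) (auto intro: trans_prod_nonneg max_prob_lt_1_nonneg)
    also have "\<dots> = \<theta> ^ (length w div 4)"
      using False by (simp add: le_div_geq)
    finally show ?thesis .
  qed
qed

end

section \<open>Recurrence\<close>

lemma sum_shift_le:
  fixes f :: "nat \<Rightarrow> real"
  assumes "\<And>k. 0 \<le> f k" and "d \<le> L"
  shows "(\<Sum>k<M - L. f (k + d)) \<le> (\<Sum>k<M. f k)"
proof -
  have "(\<Sum>k<M - L. f (k + d)) = (\<Sum>k\<in>(\<lambda>k. k + d) ` {..<M - L}. f k)"
    by (simp add: sum.reindex)
  also have "\<dots> \<le> (\<Sum>k<M. f k)"
    using assms by (intro sum_mono2) auto
  finally show ?thesis .
qed

text \<open>
  Whatever the state z at a time k < M - L, the chain visits y at time k + d z with probability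
  at least \<eta>; summing over the four possible z costs the factor 4.
\<close>

lemma (in transition_matrix) sum_mpow_window_ge:
  assumes return: "\<And>z. \<eta> \<le> mpow Q (d z) z y" and "\<And>z. d z \<le> L" and "0 \<le> \<eta>"
  shows "\<eta> / 4 * (real M - real L) \<le> (\<Sum>k<M. mpow Q (b + k) x y)"
proof (cases "L \<le> M")
  case False
  then have "\<eta> / 4 * (real M - real L) \<le> 0"
    using \<open>0 \<le> \<eta>\<close> by (simp add: mult_nonneg_nonpos)
  also have "0 \<le> (\<Sum>k<M. mpow Q (b + k) x y)"
    by (intro sum_nonneg mpow_nonneg)
  finally show ?thesis .
next
  case True
  have "real (M - L) * \<eta> = (\<Sum>k<M - L. \<Sum>z\<in>UNIV. mpow Q (b + k) x z * \<eta>)"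
    by (simp add: sum_distrib_right[symmetric] mpow_row_sum)
  also have "\<dots> \<le> (\<Sum>k<M - L. \<Sum>z\<in>UNIV. mpow Q (b + k + d z) x y)"
    by (intro sum_mono order_trans[OF mult_left_mono[OF return mpow_nonneg] mpow_add_ge])
  also have "\<dots> = (\<Sum>z\<in>UNIV. \<Sum>k<M - L. mpow Q (b + (k + d z)) x y)"
    by (subst sum.swap) (simp add: add.assoc)
  also have "\<dots> \<le> (\<Sum>z\<in>(UNIV :: nucl set). \<Sum>k<M. mpow Q (b + k) x y)"
    by (intro sum_mono sum_shift_le[where f = "\<lambda>k. mpow Q (b + k) x y"] mpow_nonneg assms(2))
  also have "\<dots> = 4 * (\<Sum>k<M. mpow Q (b + k) x y)"
    by (simp add: card_UNIV_nucl)
  finally show ?thesis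
    using True by (simp add: of_nat_diff field_simps)
qed

lemma (in irreducible_transition_matrix) recurrence_window:
  obtains L :: nat and \<epsilon> :: real
  where "0 < \<epsilon>" and "\<epsilon> \<le> 1"
    and "\<And>x y b M. \<epsilon> * (real M - real L) \<le> (\<Sum>k<M. mpow Q (b + k) x y)"
proof -
  define d where "d z y = (SOME n. 0 < mpow Q n z y)" for z y
  have d: "0 < mpow Q (d z y) z y" for z y
    unfolding d_def using irreducible unfolding irreducible_chain_def by (metis someI_ex)
  define L where "L = Max (range (\<lambda>(z, y). d z y))"
  define \<eta> where "\<eta> = min 1 (Min (range (\<lambda>(z, y). mpow Q (d z y) z y)))"
  have "0 < \<eta>" and "\<eta> \<le> 1"
    using d by (simp_all add: \<eta>_def)
  have "d z y \<le> L" for z y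
    unfolding L_def by (rule Max_ge) auto
  moreover have "\<eta> \<le> mpow Q (d z y) z y" for z y
    unfolding \<eta>_def by (rule min.coboundedI2, rule Min_le) auto
  ultimately have "\<eta> / 4 * (real M - real L) \<le> (\<Sum>k<M. mpow Q (b + k) x y)" for x y b M
    using \<open>0 < \<eta>\<close> by (intro sum_mpow_window_ge) auto
  then show ?thesis
    using that[of "\<eta> / 4" L] \<open>0 < \<eta>\<close> \<open>\<eta> \<le> 1\<close> by simp
qed

section \<open>Occurrences of a word\<close>

definition occurs_at :: "'a list \<Rightarrow> nat \<Rightarrow> 'a list \<Rightarrow> bool" where
  "occurs_at w k v \<longleftrightarrow> take (length w) (drop k v) = w"

lemma occurs_at_imp_sublist: "occurs_at w k v \<Longrightarrow> sublist w v"
  unfolding occurs_at_def sublist_def by (metis append_take_drop_id)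

lemma occurs_at_take: "k + length w \<le> n \<Longrightarrow> occurs_at w k (take n v) = occurs_at w k v"
  unfolding occurs_at_def by (simp add: drop_take take_take min_def)

lemma occurs_at_append_left:
  "length u \<le> k \<Longrightarrow> occurs_at w k (u @ v) = occurs_at w (k - length u) v"
  unfolding occurs_at_def by simp

lemma occurs_at_append_right:
  "k + length w \<le> length u \<Longrightarrow> occurs_at w k (u @ v) = occurs_at w k u"
  unfolding occurs_at_def by simp

lemma occurs_at_0_iff: "length v = length w \<Longrightarrow> occurs_at w 0 v \<longleftrightarrow> v = w"
  unfolding occurs_at_def by auto

lemma occurs_at_overlap:
  assumes "occurs_at w k (u @ v)" and "k \<le> length u" and "length u \<le> k + length w"
  shows "take (k + length w - length u) v = drop (length u - k) w"
proof -
  have "w = drop k u @ take (k + length w - length u) v"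
    using assms unfolding occurs_at_def by (simp add: take_append) (metis add.commute)
  then show ?thesis
    by (metis append_eq_conv_conj length_drop)
qed

lemma occurs_at_last:
  assumes "occurs_at w i u" and "length u = i + length w" and "w \<noteq> []"
  shows "last (x # u) = last w"
proof -
  have "drop i u = w"
    using assms(1,2) unfolding occurs_at_def by simp
  then have "u = take i u @ w"
    by (metis append_take_drop_id)
  then show ?thesis
    using assms(3) by (metis last_ConsR last_appendR Nil_is_append_conv)
qed

lemma (in transition_matrix) sum_trans_prod_occurs_at:
  assumes "k + length w \<le> N"
  shows "(\<Sum>v\<in>words N. trans_prod Q z v * of_bool (occurs_at w k v))
           = (\<Sum>y\<in>UNIV. mpow Q k z y * trans_prod Q y w)"
proof -
  obtain m where N: "N = (k + length w) + m"
    using assms le_Suc_ex by blast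
  have "(\<Sum>v\<in>words N. trans_prod Q z v * of_bool (occurs_at w k v))
      = (\<Sum>v\<in>words N. trans_prod Q z v * of_bool (occurs_at w k (take (k + length w) v)))"
    by (simp add: occurs_at_take)
  also have "\<dots> = (\<Sum>v\<in>words (k + length w). trans_prod Q z v * of_bool (occurs_at w k v))"
    unfolding N by (rule sum_trans_prod_prefix)
  also have "\<dots> = (\<Sum>u\<in>words k. trans_prod Q z u
                      * (\<Sum>v\<in>words (length w). trans_prod Q (last (z # u)) v * of_bool (v = w)))"
    unfolding sum_trans_prod_append
    by (intro sum.cong refl) (simp add: words_def occurs_at_append_left occurs_at_0_iff)
  also have "\<dots> = (\<Sum>u\<in>words k. trans_prod Q z u * trans_prod Q (last (z # u)) w)"
    by (simp only: sum_words_indicator[OF refl])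
  also have "\<dots> = (\<Sum>y\<in>UNIV. mpow Q k z y * trans_prod Q y w)"
    by (rule sum_trans_prod_last)
  finally show ?thesis .
qed

lemma sum_power_div_4_le:
  fixes t :: real
  assumes "0 \<le> t" and "t < 1"
  shows "(\<Sum>d<n. t ^ (d div 4)) \<le> 4 / (1 - t)"
proof -
  have block: "(\<Sum>d\<in>{q * 4..<q * 4 + 4}. t ^ (d div 4)) = 4 * t ^ q" for q
  proof -
    have "(\<Sum>d\<in>{q * 4..<q * 4 + 4}. t ^ (d div 4)) = (\<Sum>d\<in>{q * 4..<q * 4 + 4}. t ^ q)"
      by (intro sum.cong refl arg_cong[where f = "(^) t"] div_nat_eqI) auto
    then show ?thesis
      by simp
  qed
  have "(\<Sum>d<n. t ^ (d div 4)) \<le> (\<Sum>d<n * 4. t ^ (d div 4))"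
    using assms by (intro sum_mono2) auto
  also have "\<dots> = 4 * (\<Sum>q<n. t ^ q)"
    unfolding sum.nat_group[symmetric] block by (simp add: sum_distrib_left)
  also have "\<dots> = 4 * ((1 - t ^ n) / (1 - t))"
    using assms by (simp add: sum_gp_strict)
  also have "\<dots> \<le> 4 / (1 - t)"
    using assms by (simp add: divide_right_mono)
  finally show ?thesis .
qed

lemma sum_shifted_power_div_4_le:
  fixes t :: real
  assumes "0 \<le> t" and "t < 1"
  shows "(\<Sum>k\<in>{i<..<M}. t ^ ((k - i) div 4)) \<le> 4 / (1 - t)"
proof -
  have "(\<Sum>k\<in>{i<..<M}. t ^ ((k - i) div 4)) = (\<Sum>d\<in>(\<lambda>k. k - i) ` {i<..<M}. t ^ (d div 4))"
    by (subst sum.reindex) (auto simp: inj_on_def)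
  also have "\<dots> \<le> (\<Sum>d<M. t ^ (d div 4))"
    using assms by (intro sum_mono2) auto
  also have "\<dots> \<le> 4 / (1 - t)"
    using assms by (rule sum_power_div_4_le)
  finally show ?thesis .
qed

lemma sum_of_bool_squared:
  fixes P :: "nat \<Rightarrow> bool"
  shows "(\<Sum>i<M. of_bool (P i))\<^sup>2
     = (\<Sum>i<M. of_bool (P i) * (1 + 2 * (\<Sum>k\<in>{i<..<M}. of_bool (P k))) :: real)"
proof (induction M)
  case (Suc M)
  have "{i<..<Suc M} = insert M {i<..<M}" if "i < M" for i
    using that by auto
  moreover have "{M<..<Suc M} = {}"
    by auto
  ultimately have "(\<Sum>i<Suc M. of_bool (P i) * (1 + 2 * (\<Sum>k\<in>{i<..<Suc M}. of_bool (P k))) :: real)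
      = (\<Sum>i<M. of_bool (P i) * (1 + 2 * (\<Sum>k\<in>{i<..<M}. of_bool (P k))))
        + 2 * (\<Sum>i<M. of_bool (P i)) * of_bool (P M) + of_bool (P M)"
    by (simp add: algebra_simps sum.distrib sum_distrib_left sum_distrib_right)
  also have "\<dots> = (\<Sum>i<Suc M. of_bool (P i))\<^sup>2"
    unfolding Suc.IH[symmetric] by (simp add: power2_eq_square algebra_simps del: sum_of_bool_eq)
  finally show ?case
    by simp
qed simp

text \<open>Pointwise, 2 X / B - (X / B)^2 \<le> [X \<noteq> 0]; now integrate.\<close>

lemma second_moment_method:
  fixes \<mu> X :: "'a \<Rightarrow> real"
  assumes "\<And>v. v \<in> S \<Longrightarrow> 0 \<le> \<mu> v" and "0 < B"
    and second_moment: "(\<Sum>v\<in>S. \<mu> v * (X v)\<^sup>2) \<le> (\<Sum>v\<in>S. \<mu> v * X v) * B"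
  shows "(\<Sum>v\<in>S. \<mu> v * X v) / B \<le> (\<Sum>v\<in>S. \<mu> v * of_bool (X v \<noteq> 0))"
proof -
  define E where "E = (\<Sum>v\<in>S. \<mu> v * X v)"
  have pointwise: "2 * X v / B - (X v / B)\<^sup>2 \<le> of_bool (X v \<noteq> 0)" for v
  proof (cases "X v = 0")
    case False
    have "0 \<le> (X v / B - 1)\<^sup>2"
      by simp
    then show ?thesis
      using False by (simp add: power2_eq_square algebra_simps)
  qed simp
  have "E / B = 2 * E / B - E * B / B\<^sup>2"
    using \<open>0 < B\<close> by (simp add: power2_eq_square field_simps)
  also have "\<dots> \<le> 2 * E / B - (\<Sum>v\<in>S. \<mu> v * (X v)\<^sup>2) / B\<^sup>2"
    using second_moment by (simp add: E_def divide_right_mono)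
  also have "\<dots> = (\<Sum>v\<in>S. \<mu> v * (2 * X v / B - (X v / B)\<^sup>2))"
    by (simp add: E_def sum_subtractf sum_distrib_left sum_divide_distrib right_diff_distrib
        power_divide mult_ac)
  also have "\<dots> \<le> (\<Sum>v\<in>S. \<mu> v * of_bool (X v \<noteq> 0))"
    by (intro sum_mono mult_left_mono pointwise assms(1))
  finally show ?thesis
    by (simp add: E_def)
qed

lemma sum_squared_count_le:
  fixes \<mu> :: "'a \<Rightarrow> real" and P :: "nat \<Rightarrow> 'a \<Rightarrow> bool"
  assumes single: "\<And>i. i < M \<Longrightarrow> (\<Sum>v\<in>S. \<mu> v * of_bool (P i v)) = e i"
    and pair: "\<And>i k. i < k \<Longrightarrow> k < M \<Longrightarrow> (\<Sum>v\<in>S. \<mu> v * of_bool (P i v \<and> P k v)) \<le> e i * c i k"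
  shows "(\<Sum>v\<in>S. \<mu> v * (\<Sum>i<M. of_bool (P i v))\<^sup>2) \<le> (\<Sum>i<M. e i * (1 + 2 * (\<Sum>k\<in>{i<..<M}. c i k)))"
proof -
  have "(\<Sum>v\<in>S. \<mu> v * (\<Sum>i<M. of_bool (P i v))\<^sup>2)
      = (\<Sum>v\<in>S. \<Sum>i<M. \<mu> v * of_bool (P i v) + 2 * (\<Sum>k\<in>{i<..<M}. \<mu> v * of_bool (P i v \<and> P k v)))"
    unfolding sum_of_bool_squared
    by (simp only: sum_distrib_left distrib_left mult_1_right mult_1_left of_bool_conj mult_ac)
  also have "\<dots> = (\<Sum>i<M. (\<Sum>v\<in>S. \<mu> v * of_bool (P i v))
                    + 2 * (\<Sum>k\<in>{i<..<M}. \<Sum>v\<in>S. \<mu> v * of_bool (P i v \<and> P k v)))"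
    by (subst sum.swap) (simp only: sum.distrib sum_distrib_left[symmetric] sum.swap[of _ S])
  also have "\<dots> \<le> (\<Sum>i<M. e i + 2 * (\<Sum>k\<in>{i<..<M}. e i * c i k))"
    by (intro sum_mono add_mono mult_left_mono) (auto simp: single pair)
  also have "\<dots> = (\<Sum>i<M. e i * (1 + 2 * (\<Sum>k\<in>{i<..<M}. c i k)))"
    by (simp add: sum_distrib_left distrib_left mult_ac)
  finally show ?thesis .
qed

locale pattern = ergodic_transition_matrix +
  fixes w :: "nucl list"
  assumes pattern_nonempty: "w \<noteq> []"
begin

abbreviation tail_prob :: real where
  "tail_prob \<equiv> trans_prod Q (hd w) (tl w)"

lemma trans_prod_pattern: "trans_prod Q y w = Q y (hd w) * tail_prob"
  using pattern_nonempty by (cases w) auto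

lemma tail_prob_nonneg: "0 \<le> tail_prob"
  by (rule trans_prod_nonneg)

lemma expected_occurrence:
  assumes "k + length w \<le> N"
  shows "(\<Sum>v\<in>words N. trans_prod Q z v * of_bool (occurs_at w k v)) = tail_prob * mpow Q (Suc k) z (hd w)"
proof -
  have "(\<Sum>v\<in>words N. trans_prod Q z v * of_bool (occurs_at w k v))
      = (\<Sum>y\<in>UNIV. mpow Q k z y * Q y (hd w)) * tail_prob"
    unfolding sum_trans_prod_occurs_at[OF assms] trans_prod_pattern
    by (simp add: sum_distrib_right mult.assoc)
  then show ?thesis
    by simp
qed

text \<open>
  Given an occurrence of w at i, an occurrence at k > i either overlaps it, and then its last k - i
  letters are forced, or it lies entirely in the continuation.
\<close>

lemma occurrence_after_occurrence_le:
  assumes "occurs_at w i u" and "length u = i + length w" and "i < k"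
    and "k + length w \<le> length u + m"
  shows "(\<Sum>v\<in>words m. trans_prod Q (last w) v * of_bool (occurs_at w k (u @ v)))
           \<le> \<theta> ^ ((k - i) div 4) + tail_prob"
proof (cases "length u \<le> k")
  case True
  have "(\<Sum>v\<in>words m. trans_prod Q (last w) v * of_bool (occurs_at w k (u @ v)))
      = (\<Sum>v\<in>words m. trans_prod Q (last w) v * of_bool (occurs_at w (k - length u) v))"
    using True by (simp add: occurs_at_append_left)
  also have "\<dots> = tail_prob * mpow Q (Suc (k - length u)) (last w) (hd w)"
    using True assms(4) by (intro expected_occurrence) simp
  also have "\<dots> \<le> tail_prob"
    by (intro mult_right_le_one_le tail_prob_nonneg mpow_nonneg mpow_le_1)
  finally show ?thesis
    using max_prob_lt_1_nonneg by (simp add: add_increasing)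
next
  case False
  define d where "d = k - i"
  have d: "d < length w" "length u - k = length w - d" "k + length w - length u = d" "d \<le> m"
    using False assms(2-4) by (auto simp: d_def)
  obtain m' where m: "m = d + m'"
    using \<open>d \<le> m\<close> le_Suc_ex by blast
  have "(\<Sum>v\<in>words m. trans_prod Q (last w) v * of_bool (occurs_at w k (u @ v)))
      \<le> (\<Sum>v\<in>words m. trans_prod Q (last w) v * of_bool (take d v = drop (length w - d) w))"
    using occurs_at_overlap[of w k u] False assms(2) d
    by (intro sum_mono mult_left_mono trans_prod_nonneg) auto
  also have "\<dots> = (\<Sum>v\<in>words d. trans_prod Q (last w) v * of_bool (v = drop (length w - d) w))"
    unfolding m by (rule sum_trans_prod_prefix)
  also have "\<dots> = trans_prod Q (last w) (drop (length w - d) w)"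
    using d by (intro sum_words_indicator) simp
  also have "\<dots> \<le> \<theta> ^ (d div 4)"
    using trans_prod_le_power[of "last w" "drop (length w - d) w"] d by simp
  finally show ?thesis
    using tail_prob_nonneg by (simp add: d_def)
qed

lemma pair_occurrence_le:
  assumes "i < k" and "k + length w \<le> N"
  shows "(\<Sum>v\<in>words N. trans_prod Q z v * of_bool (occurs_at w i v \<and> occurs_at w k v))
           \<le> tail_prob * mpow Q (Suc i) z (hd w) * (\<theta> ^ ((k - i) div 4) + tail_prob)"
proof -
  define c where "c = \<theta> ^ ((k - i) div 4) + tail_prob"
  have "i + length w \<le> N"
    using assms by simp
  then obtain m where N: "N = (i + length w) + m"
    using le_Suc_ex by blast
  have "(\<Sum>v\<in>words N. trans_prod Q z v * of_bool (occurs_at w i v \<and> occurs_at w k v))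
      = (\<Sum>u\<in>words (i + length w). trans_prod Q z u
            * (\<Sum>v\<in>words m. trans_prod Q (last (z # u)) v
                 * of_bool (occurs_at w i (u @ v) \<and> occurs_at w k (u @ v))))"
    unfolding N by (rule sum_trans_prod_append)
  also have "\<dots> = (\<Sum>u\<in>words (i + length w). trans_prod Q z u * of_bool (occurs_at w i u)
            * (\<Sum>v\<in>words m. trans_prod Q (last (z # u)) v * of_bool (occurs_at w k (u @ v))))"
    by (intro sum.cong refl)
      (simp add: words_def occurs_at_append_right of_bool_conj sum_distrib_left mult_ac
        del: sum_of_bool_mult_eq)
  also have "\<dots> \<le> (\<Sum>u\<in>words (i + length w). trans_prod Q z u * of_bool (occurs_at w i u) * c)"
  proof (intro sum_mono)
    fix u :: "nucl list" assume "u \<in> words (i + length w)"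
    then have u: "length u = i + length w"
      by (simp add: words_def)
    show "trans_prod Q z u * of_bool (occurs_at w i u)
                 * (\<Sum>v\<in>words m. trans_prod Q (last (z # u)) v * of_bool (occurs_at w k (u @ v)))
               \<le> trans_prod Q z u * of_bool (occurs_at w i u) * c"
    proof (cases "occurs_at w i u")
      case True
      have "k + length w \<le> length u + m"
        using assms(2) u N by simp
      then have "(\<Sum>v\<in>words m. trans_prod Q (last (z # u)) v * of_bool (occurs_at w k (u @ v))) \<le> c"
        using occurrence_after_occurrence_le[OF True u \<open>i < k\<close>] occurs_at_last[OF True u pattern_nonempty]
        by (simp add: c_def)
      then show ?thesis
        by (intro mult_left_mono) (simp_all add: trans_prod_nonneg)
    qed simp
  qed
  also have "\<dots> = (\<Sum>u\<in>words (i + length w). trans_prod Q z u * of_bool (occurs_at w i u)) * c"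
    by (simp only: sum_distrib_right)
  also have "\<dots> = tail_prob * mpow Q (Suc i) z (hd w) * c"
    by (simp only: expected_occurrence order_refl)
  finally show ?thesis
    by (simp add: c_def)
qed

lemma first_moment_occurrences:
  "(\<Sum>v\<in>words (length w + M). trans_prod Q z v * (\<Sum>k<M. of_bool (occurs_at w k v)))
     = tail_prob * (\<Sum>k<M. mpow Q (Suc k) z (hd w))"
  unfolding sum_distrib_left
  by (subst sum.swap) (intro sum.cong refl, simp add: expected_occurrence del: sum_mult_of_bool_eq)

lemma second_moment_occurrences:
  "(\<Sum>v\<in>words (length w + M). trans_prod Q z v * (\<Sum>k<M. of_bool (occurs_at w k v))\<^sup>2)
     \<le> (\<Sum>v\<in>words (length w + M). trans_prod Q z v * (\<Sum>k<M. of_bool (occurs_at w k v)))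
         * (1 + 8 / (1 - \<theta>) + 2 * real M * tail_prob)"
proof -
  define B where "B = 1 + 8 / (1 - \<theta>) + 2 * real M * tail_prob"
  define e where "e i = tail_prob * mpow Q (Suc i) z (hd w)" for i
  have \<theta>: "0 \<le> \<theta>" "\<theta> < 1"
    by (simp_all add: max_prob_lt_1_nonneg max_prob_lt_1_lt_1)
  have pairs: "(\<Sum>k\<in>{i<..<M}. \<theta> ^ ((k - i) div 4) + tail_prob) \<le> 4 / (1 - \<theta>) + M * tail_prob" for i
  proof -
    have "(\<Sum>k\<in>{i<..<M}. \<theta> ^ ((k - i) div 4) + tail_prob)
        = (\<Sum>k\<in>{i<..<M}. \<theta> ^ ((k - i) div 4)) + card {i<..<M} * tail_prob"
      by (simp add: sum.distrib)
    also have "\<dots> \<le> 4 / (1 - \<theta>) + M * tail_prob"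
      using \<theta> tail_prob_nonneg
      by (intro add_mono sum_shifted_power_div_4_le mult_right_mono) auto
    finally show ?thesis .
  qed
  have "(\<Sum>v\<in>words (length w + M). trans_prod Q z v * (\<Sum>k<M. of_bool (occurs_at w k v))\<^sup>2)
      \<le> (\<Sum>i<M. e i * (1 + 2 * (\<Sum>k\<in>{i<..<M}. \<theta> ^ ((k - i) div 4) + tail_prob)))"
    by (rule sum_squared_count_le, unfold e_def)
      (rule expected_occurrence, simp, rule pair_occurrence_le, simp_all)
  also have "\<dots> \<le> (\<Sum>i<M. e i * B)"
  proof (rule sum_mono, rule mult_left_mono)
    fix i
    show "1 + 2 * (\<Sum>k\<in>{i<..<M}. \<theta> ^ ((k - i) div 4) + tail_prob) \<le> B"
      using pairs[of i] by (simp add: B_def)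
    show "0 \<le> e i"
      unfolding e_def by (intro mult_nonneg_nonneg tail_prob_nonneg mpow_nonneg)
  qed
  also have "\<dots> = tail_prob * (\<Sum>k<M. mpow Q (Suc k) z (hd w)) * B"
    by (simp only: e_def sum_distrib_left sum_distrib_right)
  finally show ?thesis
    by (simp only: first_moment_occurrences B_def)
qed

lemma occurrence_prob_ge:
  "tail_prob * (\<Sum>k<M. mpow Q (Suc k) z (hd w)) / (1 + 8 / (1 - \<theta>) + 2 * real M * tail_prob)
     \<le> (\<Sum>v\<in>words (length w + M). trans_prod Q z v * of_bool (\<exists>k<M. occurs_at w k v))"
proof -
  have "0 < 1 + 8 / (1 - \<theta>) + 2 * real M * tail_prob"
    using max_prob_lt_1_lt_1[of Q] tail_prob_nonneg by (simp add: add_pos_nonneg)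
  then have "(\<Sum>v\<in>words (length w + M). trans_prod Q z v * (\<Sum>k<M. of_bool (occurs_at w k v)))
               / (1 + 8 / (1 - \<theta>) + 2 * real M * tail_prob)
      \<le> (\<Sum>v\<in>words (length w + M). trans_prod Q z v * of_bool ((\<Sum>k<M. of_bool (occurs_at w k v) :: real) \<noteq> 0))"
    by (intro second_moment_method trans_prod_nonneg second_moment_occurrences)
  moreover have "of_bool ((\<Sum>k<M. of_bool (occurs_at w k v) :: real) \<noteq> 0) = (of_bool (\<exists>k<M. occurs_at w k v) :: real)"
    for v by (subst sum_nonneg_eq_0_iff) auto
  ultimately show ?thesis
    by (simp only: first_moment_occurrences)
qed

end

section \<open>Avoidance and the waiting time\<close>

lemma ends_with_word_iff_suffix: "ends_with_word s u \<longleftrightarrow> suffix (rev s) u"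
proof
  assume "ends_with_word s u"
  then show "suffix (rev s) u"
    unfolding ends_with_word_def suffix_def by (metis append_take_drop_id)
next
  assume "suffix (rev s) u"
  then show "ends_with_word s u"
    unfolding ends_with_word_def suffix_def by auto
qed

definition avoidance_prob :: "(nucl \<Rightarrow> nucl \<Rightarrow> real) \<Rightarrow> nucl list \<Rightarrow> nucl \<Rightarrow> nat \<Rightarrow> real" where
  "avoidance_prob Q w x n = (\<Sum>v\<in>words n. trans_prod Q x v * of_bool (\<not> sublist w v))"

context transition_matrix
begin

lemma path_prob_nonneg: "(\<And>u. 0 \<le> p u) \<Longrightarrow> 0 \<le> path_prob p Q w"
  by (cases w) (auto intro: mult_nonneg_nonneg trans_prod_nonneg)

lemma avoidance_prob_nonneg: "0 \<le> avoidance_prob Q w x n"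
  unfolding avoidance_prob_def by (intro sum_nonneg mult_nonneg_nonneg trans_prod_nonneg) simp

lemma avoidance_prob_le_1: "avoidance_prob Q w x n \<le> 1"
proof -
  have "avoidance_prob Q w x n \<le> (\<Sum>v\<in>words n. trans_prod Q x v)"
    unfolding avoidance_prob_def by (intro sum_mono mult_right_le_one_le trans_prod_nonneg) auto
  then show ?thesis
    by (simp add: sum_trans_prod)
qed

lemma avoidance_prob_antimono:
  assumes "n \<le> m"
  shows "avoidance_prob Q w x m \<le> avoidance_prob Q w x n"
proof -
  obtain k where m: "m = n + k"
    using assms le_Suc_ex by blast
  have "avoidance_prob Q w x m \<le> (\<Sum>v\<in>words (n + k). trans_prod Q x v * of_bool (\<not> sublist w (take n v)))"
    unfolding avoidance_prob_def m
    by (intro sum_mono mult_left_mono trans_prod_nonneg) (auto intro: sublist_order.order.trans)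
  also have "\<dots> = avoidance_prob Q w x n"
    unfolding avoidance_prob_def by (rule sum_trans_prod_prefix)
  finally show ?thesis .
qed

lemma not_sublist_before_first_hit:
  assumes "\<forall>m<Suc (Suc n). \<not> ends_with_word s (take m w)"
  shows "\<not> sublist (rev s) (take (Suc n) w)"
proof
  assume "sublist (rev s) (take (Suc n) w)"
  then obtain zs where "prefix zs (take (Suc n) w)" and "suffix (rev s) zs"
    by (auto simp: sublist_altdef)
  moreover have "length zs \<le> Suc n"
    using prefix_length_le[OF \<open>prefix zs (take (Suc n) w)\<close>] by simp
  moreover have "zs = take (length zs) (take (Suc n) w)"
    using \<open>prefix zs (take (Suc n) w)\<close> unfolding prefix_def by (metis append_eq_conv_conj)
  ultimately have "ends_with_word s (take (length zs) w)" and "length zs < Suc (Suc n)"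
    by (simp_all add: ends_with_word_iff_suffix min_def)
  then show False
    using assms by (metis ends_with_word_iff_suffix)
qed

text \<open>
  Y = n + 2 rules out an occurrence within the first n + 1 letters, hence within the n letters
  that follow the initial one; from the initial state this is what avoidance_prob measures.
\<close>

lemma waiting_prob_Suc_Suc_le:
  assumes "\<And>u. 0 \<le> p u"
  shows "waiting_prob p Q s (Suc (Suc n)) \<le> (\<Sum>x\<in>UNIV. p x * avoidance_prob Q (rev s) x n)"
proof -
  let ?avoid = "\<lambda>w. \<not> sublist (rev s) (take (Suc n) w)"
  have "waiting_prob p Q s (Suc (Suc n)) \<le> (\<Sum>w\<in>{w \<in> words (Suc (Suc n)). ?avoid w}. path_prob p Q w)"
    unfolding waiting_prob_def using not_sublist_before_first_hit
    by (intro sum_mono2 path_prob_nonneg assms) (simp, auto simp: words_def)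
  also have "\<dots> = (\<Sum>w\<in>words (Suc (Suc n)). path_prob p Q w * of_bool (?avoid w))"
    by (simp add: sum.inter_filter[symmetric] Int_def)
  also have "\<dots> = (\<Sum>x\<in>UNIV. p x * (\<Sum>v\<in>words (Suc n).
                      trans_prod Q x v * of_bool (\<not> sublist (rev s) (x # take n v))))"
    by (simp add: sum_words_Suc sum_distrib_left mult.assoc del: sum_mult_of_bool_eq)
  also have "\<dots> \<le> (\<Sum>x\<in>UNIV. p x * (\<Sum>v\<in>words (Suc n).
                      trans_prod Q x v * of_bool (\<not> sublist (rev s) (take n v))))"
    by (intro sum_mono mult_left_mono assms trans_prod_nonneg) (auto simp: sublist_Cons_right)
  also have "\<dots> = (\<Sum>x\<in>UNIV. p x * avoidance_prob Q (rev s) x n)"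
    unfolding avoidance_prob_def
      sum_trans_prod_prefix[where n = n and m = 1 and f = "\<lambda>v. of_bool (\<not> sublist (rev s) v)",
        unfolded Suc_eq_plus1[symmetric]] ..
  finally show ?thesis .
qed

end

section \<open>Radius of convergence\<close>

lemma conv_radius_ge_of_geometric_bound:
  fixes a :: "nat \<Rightarrow> real" and c \<rho> :: real
  assumes bound: "\<And>n. \<bar>a n\<bar> \<le> c * \<rho> ^ n" and "0 < \<rho>"
  shows "ereal (1 / \<rho>) \<le> conv_radius a"
proof (rule conv_radius_geI_ex')
  fix t :: real assume "0 < t" and "ereal t < ereal (1 / \<rho>)"
  then have "\<rho> * t < 1" and "0 \<le> \<rho> * t"
    using \<open>0 < \<rho>\<close> by (auto simp: field_simps)
  show "summable (\<lambda>n. a n * of_real t ^ n)"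
  proof (rule summable_comparison_test')
    show "summable (\<lambda>n. c * (\<rho> * t) ^ n)"
      using \<open>\<rho> * t < 1\<close> \<open>0 \<le> \<rho> * t\<close> by (intro summable_mult summable_geometric) simp
    show "norm (a n * of_real t ^ n) \<le> c * (\<rho> * t) ^ n" for n
      using mult_right_mono[OF bound[of n], of "t ^ n"] \<open>0 < t\<close>
      by (simp add: abs_mult power_mult_distrib mult.assoc)
  qed
qed

lemma conv_radius_ge_of_block_decay:
  fixes a :: "nat \<Rightarrow> real" and W :: nat
  assumes decay: "\<And>n. \<bar>a n\<bar> \<le> (1 - \<delta>) ^ (n div W)" and "0 < \<delta>" and "\<delta> < 1" and "0 < W"
  shows "ereal (1 + \<delta> / W) \<le> conv_radius a"
proof -
  define \<rho> where "\<rho> = 1 - \<delta> / W"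
  have "0 < \<delta> / W" "\<delta> / W < 1"
    using assms(2-4) by (auto simp: field_simps)
  then have \<rho>: "0 < \<rho>" "\<rho> < 1"
    by (auto simp: \<rho>_def)
  have "1 - \<delta> \<le> \<rho> ^ W"
    using Bernoulli_inequality[of "- (\<delta> / W)" W] \<open>\<delta> / W < 1\<close> \<open>0 < W\<close> by (simp add: \<rho>_def)
  have "\<bar>a n\<bar> \<le> (1 / \<rho> ^ W) * \<rho> ^ n" for n
  proof -
    have "n = W * (n div W) + n mod W"
      by simp
    then have "n < W * (n div W) + W"
      using mod_less_divisor[OF \<open>0 < W\<close>, of n] by linarith
    then have "\<rho> ^ (W * (n div W)) * \<rho> ^ W \<le> \<rho> ^ n"
      using \<rho> by (simp add: power_add[symmetric] power_decreasing)
    have "\<bar>a n\<bar> \<le> (\<rho> ^ W) ^ (n div W)"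
      using decay[of n] power_mono[OF \<open>1 - \<delta> \<le> \<rho> ^ W\<close>, of "n div W"] \<open>\<delta> < 1\<close> by simp
    then have "\<bar>a n\<bar> * \<rho> ^ W \<le> (\<rho> ^ W) ^ (n div W) * \<rho> ^ W"
      using \<rho> by (intro mult_right_mono) simp_all
    also have "\<dots> \<le> \<rho> ^ n"
      using \<open>\<rho> ^ (W * (n div W)) * \<rho> ^ W \<le> \<rho> ^ n\<close> by (simp add: power_mult)
    finally show ?thesis
      using \<rho> by (simp add: field_simps)
  qed
  then have "ereal (1 / \<rho>) \<le> conv_radius a"
    using \<open>0 < \<rho>\<close> by (rule conv_radius_ge_of_geometric_bound)
  moreover have "(1 + \<delta> / W) * \<rho> = 1 - (\<delta> / W)\<^sup>2"
    by (simp add: \<rho>_def power2_eq_square algebra_simps)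
  then have "1 + \<delta> / W \<le> 1 / \<rho>"
    using zero_le_power2[of "\<delta> / W"] \<rho> by (simp add: le_divide_eq)
  ultimately show ?thesis
    by (metis ereal_less_eq(3) order_trans)
qed

definition occurrence_bound :: "(nucl \<Rightarrow> nucl \<Rightarrow> real) \<Rightarrow> nat \<Rightarrow> real \<Rightarrow> real" where
  "occurrence_bound Q L \<epsilon> = \<epsilon> / (2 * (5 + 8 / (1 - max_prob_lt_1 Q) + 4 * real L))"

definition radius_gap :: "(nucl \<Rightarrow> nucl \<Rightarrow> real) \<Rightarrow> nat \<Rightarrow> real \<Rightarrow> real" where
  "radius_gap Q L \<epsilon> = occurrence_bound Q L \<epsilon> / (4 / (1 - max_prob_lt_1 Q) + 2 + 2 * real L)"

lemma occurrence_bound_pos: "0 < \<epsilon> \<Longrightarrow> 0 < occurrence_bound Q L \<epsilon>"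
  using max_prob_lt_1_lt_1[of Q] unfolding occurrence_bound_def
  by (intro divide_pos_pos mult_pos_pos add_pos_nonneg) auto

lemma occurrence_bound_lt_1:
  assumes "\<epsilon> \<le> 1"
  shows "occurrence_bound Q L \<epsilon> < 1"
proof -
  have "10 \<le> 2 * (5 + 8 / (1 - max_prob_lt_1 Q) + 4 * real L)"
    using max_prob_lt_1_lt_1[of Q] by simp
  then show ?thesis
    unfolding occurrence_bound_def using assms by (simp add: divide_less_eq)
qed

lemma radius_gap_pos: "0 < \<epsilon> \<Longrightarrow> 0 < radius_gap Q L \<epsilon>"
  using occurrence_bound_pos max_prob_lt_1_lt_1[of Q] unfolding radius_gap_def
  by (intro divide_pos_pos add_pos_nonneg) auto

locale recurrent_pattern = pattern +
  fixes L :: nat and \<epsilon> :: real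
  assumes \<epsilon>_pos: "0 < \<epsilon>" and \<epsilon>_le_1: "\<epsilon> \<le> 1"
    and window: "\<And>x y b M. \<epsilon> * (real M - real L) \<le> (\<Sum>k<M. mpow Q (b + k) x y)"
    and tail_prob_pos: "0 < tail_prob"
begin

abbreviation \<delta> :: real where
  "\<delta> \<equiv> occurrence_bound Q L \<epsilon>"

text \<open>
  The window is long enough for E X \<ge> \<epsilon>/2 and short enough for the pair term M T of the
  second moment to stay bounded.
\<close>

definition window_length :: nat where
  "window_length = nat \<lceil>1 / tail_prob\<rceil> + 2 * L"

abbreviation block_length :: nat where
  "block_length \<equiv> length w + window_length"

lemma window_length_bounds:
  "1 / tail_prob \<le> real window_length" "2 * real L \<le> real window_length"
  "real window_length \<le> 1 / tail_prob + 1 + 2 * real L"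
proof -
  have "real window_length = real_of_int \<lceil>1 / tail_prob\<rceil> + 2 * real L"
    using tail_prob_pos by (simp add: window_length_def)
  moreover have "0 < 1 / tail_prob"
    using tail_prob_pos by simp
  ultimately show "1 / tail_prob \<le> real window_length" "2 * real L \<le> real window_length"
    "real window_length \<le> 1 / tail_prob + 1 + 2 * real L"
    using le_of_int_ceiling[of "1 / tail_prob"] of_int_ceiling_le_add_one[of "1 / tail_prob"]
    by linarith+
qed

lemma window_length_mult_tail_prob_le: "real window_length * tail_prob \<le> 2 + 2 * real L"
proof -
  have "real window_length * tail_prob \<le> (1 / tail_prob + 1 + 2 * L) * tail_prob"
    using window_length_bounds(3) tail_prob_pos by (simp add: mult_right_mono)
  also have "\<dots> = 1 + tail_prob + 2 * L * tail_prob"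
    using tail_prob_pos by (simp add: field_simps)
  also have "\<dots> \<le> 2 + 2 * real L"
    using trans_prod_le_1[of "hd w" "tl w"] mult_left_le[of tail_prob "2 * real L"] by simp
  finally show ?thesis .
qed

lemma expected_occurrences_in_window_ge:
  "\<epsilon> / 2 \<le> tail_prob * (\<Sum>k<window_length. mpow Q (Suc k) x (hd w))"
proof -
  define M where "M = window_length"
  have "1 \<le> tail_prob * real M"
    using window_length_bounds(1) tail_prob_pos by (simp add: M_def field_simps)
  moreover have "2 * (tail_prob * real L) \<le> tail_prob * real M"
    using mult_left_mono[OF window_length_bounds(2), of tail_prob] tail_prob_pos by (simp add: M_def)
  ultimately have "1 / 2 \<le> tail_prob * (real M - real L)"
    by (simp add: right_diff_distrib)
  then have "\<epsilon> * (1 / 2) \<le> \<epsilon> * (tail_prob * (real M - real L))"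
    using \<epsilon>_pos by (intro mult_left_mono) simp_all
  then have "\<epsilon> / 2 \<le> \<epsilon> * (tail_prob * (real M - real L))"
    by simp
  also have "\<dots> = tail_prob * (\<epsilon> * (real M - real L))"
    by (simp only: mult.left_commute)
  also have "\<dots> \<le> tail_prob * (\<Sum>k<M. mpow Q (Suc k) x (hd w))"
    using window[where x = x and y = "hd w" and b = 1 and M = M] tail_prob_pos
    by (intro mult_left_mono) simp_all
  finally show ?thesis
    by (simp add: M_def)
qed

lemma occurrence_in_window:
  "\<delta> \<le> (\<Sum>v\<in>words block_length. trans_prod Q x v * of_bool (\<exists>k<window_length. occurs_at w k v))"
proof -
  define B where "B = 1 + 8 / (1 - \<theta>) + 2 * real window_length * tail_prob"
  define E where "E = tail_prob * (\<Sum>k<window_length. mpow Q (Suc k) x (hd w))"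
  have "\<epsilon> / 2 \<le> E"
    unfolding E_def by (rule expected_occurrences_in_window_ge)
  have "B \<le> 5 + 8 / (1 - \<theta>) + 4 * L" and "0 < B"
    using window_length_mult_tail_prob_le max_prob_lt_1_lt_1[of Q] tail_prob_pos
    by (simp_all add: B_def add_pos_nonneg)
  have "\<delta> = (\<epsilon> / 2) / (5 + 8 / (1 - \<theta>) + 4 * L)"
    by (simp add: occurrence_bound_def)
  also have "\<dots> \<le> E / B"
    using \<open>\<epsilon> / 2 \<le> E\<close> \<open>B \<le> 5 + 8 / (1 - \<theta>) + 4 * L\<close> \<open>0 < B\<close> \<epsilon>_pos
    by (intro frac_le) linarith+
  also have "\<dots> \<le> (\<Sum>v\<in>words block_length. trans_prod Q x v * of_bool (\<exists>k<window_length. occurs_at w k v))"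
    unfolding E_def B_def by (rule occurrence_prob_ge)
  finally show ?thesis .
qed

lemma avoidance_prob_block:
  assumes "\<And>z. avoidance_prob Q w z n \<le> c"
  shows "avoidance_prob Q w x (block_length + n) \<le> (1 - \<delta>) * c"
proof -
  define occ where "occ u = (\<exists>k<window_length. occurs_at w k u)" for u
  have "0 \<le> c"
    using assms[of x] avoidance_prob_nonneg[of w x n] by linarith
  have "sublist w (u @ v)" if "sublist w u \<or> sublist w v" for u v :: "nucl list"
    using that by (meson sublist_append_leftI sublist_append_rightI sublist_order.order.trans)
  then have avoid_split:
    "of_bool (\<not> sublist w (u @ v)) \<le> (of_bool (\<not> occ u) * of_bool (\<not> sublist w v) :: real)" for u v
    by (auto simp: occ_def dest: occurs_at_imp_sublist)
  have "avoidance_prob Q w x (block_length + n)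
      = (\<Sum>u\<in>words block_length. trans_prod Q x u
           * (\<Sum>v\<in>words n. trans_prod Q (last (x # u)) v * of_bool (\<not> sublist w (u @ v))))"
    unfolding avoidance_prob_def by (rule sum_trans_prod_append)
  also have "\<dots> \<le> (\<Sum>u\<in>words block_length. trans_prod Q x u
           * (of_bool (\<not> occ u) * avoidance_prob Q w (last (x # u)) n))"
  proof (intro sum_mono mult_left_mono trans_prod_nonneg)
    fix u :: "nucl list"
    have "trans_prod Q z v * of_bool (\<not> sublist w (u @ v))
        \<le> of_bool (\<not> occ u) * (trans_prod Q z v * of_bool (\<not> sublist w v))" for z v
      using mult_left_mono[OF avoid_split[of u v] trans_prod_nonneg[of z v]] by (simp only: mult.left_commute)
    then show "(\<Sum>v\<in>words n. trans_prod Q (last (x # u)) v * of_bool (\<not> sublist w (u @ v)))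
        \<le> of_bool (\<not> occ u) * avoidance_prob Q w (last (x # u)) n"
      unfolding avoidance_prob_def sum_distrib_left by (intro sum_mono)
  qed
  also have "\<dots> \<le> (\<Sum>u\<in>words block_length. trans_prod Q x u * (1 - of_bool (occ u)) * c)"
    using assms by (intro sum_mono) (simp add: mult_left_mono trans_prod_nonneg)
  also have "\<dots> = (1 - (\<Sum>u\<in>words block_length. trans_prod Q x u * of_bool (occ u))) * c"
    by (simp add: sum_distrib_right[symmetric] right_diff_distrib sum_subtractf sum_trans_prod
        del: sum_mult_of_bool_eq)
  also have "\<dots> \<le> (1 - \<delta>) * c"
    using occurrence_in_window[of x] \<open>0 \<le> c\<close> by (intro mult_right_mono) (simp_all add: occ_def)
  finally show ?thesis .
qed

lemma avoidance_prob_le_power: "avoidance_prob Q w x n \<le> (1 - \<delta>) ^ (n div block_length)"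
proof -
  have "avoidance_prob Q w z (q * block_length) \<le> (1 - \<delta>) ^ q" for q z
  proof (induction q arbitrary: z)
    case 0
    then show ?case
      by (simp add: avoidance_prob_le_1)
  next
    case (Suc q)
    then show ?case
      using avoidance_prob_block[of "q * block_length" "(1 - \<delta>) ^ q" z] by (simp add: add.commute)
  qed
  moreover have "avoidance_prob Q w x n \<le> avoidance_prob Q w x (n div block_length * block_length)"
    by (rule avoidance_prob_antimono) simp
  ultimately show ?thesis
    by (meson order_trans)
qed

lemma length_mult_tail_prob_le: "real (length w) * tail_prob \<le> 4 / (1 - \<theta>)"
proof -
  have \<theta>: "0 \<le> \<theta>" "\<theta> < 1"
    by (simp_all add: max_prob_lt_1_nonneg max_prob_lt_1_lt_1)
  have "real (length w) * tail_prob \<le> (\<Sum>d<length w. \<theta> ^ ((length w - 1) div 4))"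
    using trans_prod_le_power[of "hd w" "tl w"] by (simp add: mult_left_mono)
  also have "\<dots> \<le> (\<Sum>d<length w. \<theta> ^ (d div 4))"
    using \<theta> by (intro sum_mono power_decreasing div_le_mono) auto
  also have "\<dots> \<le> 4 / (1 - \<theta>)"
    using \<theta> by (rule sum_power_div_4_le)
  finally show ?thesis .
qed

lemma radius_gap_mult_path_prob_le:
  assumes "\<And>u. 0 \<le> p u" and "\<And>u. p u \<le> 1"
  shows "radius_gap Q L \<epsilon> * path_prob p Q w \<le> \<delta> / block_length"
proof -
  define D where "D = 4 / (1 - \<theta>) + 2 + 2 * real L"
  have "path_prob p Q w = p (hd w) * tail_prob"
    using pattern_nonempty by (cases w) auto
  then have "0 \<le> path_prob p Q w" and "path_prob p Q w \<le> tail_prob"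
    using assms tail_prob_nonneg by (auto intro: mult_left_le_one_le)
  then have "real block_length * path_prob p Q w \<le> real block_length * tail_prob"
    by (simp add: mult_left_mono)
  also have "\<dots> \<le> D"
    using length_mult_tail_prob_le window_length_mult_tail_prob_le by (simp add: D_def distrib_right)
  finally have "\<delta> * (path_prob p Q w * block_length) \<le> \<delta> * D"
    using occurrence_bound_pos[OF \<epsilon>_pos, of Q L] by (intro mult_left_mono) (simp_all add: mult.commute)
  moreover have "0 < D"
    using max_prob_lt_1_lt_1[of Q] by (simp add: D_def add_pos_nonneg)
  moreover have "0 < real block_length"
    using pattern_nonempty by (cases w) auto
  ultimately have "\<delta> / D * path_prob p Q w \<le> \<delta> / block_length"
    by (simp add: field_simps)
  then show ?thesis
    by (simp add: radius_gap_def D_def)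
qed

lemma waiting_prob_le_power:
  assumes "\<And>u. 0 \<le> p u" and "(\<Sum>u\<in>UNIV. p u) = 1"
  shows "\<bar>waiting_prob p Q (rev w) (n + 2)\<bar> \<le> (1 - \<delta>) ^ (n div block_length)"
proof -
  have "0 \<le> waiting_prob p Q (rev w) (n + 2)"
    unfolding waiting_prob_def by (intro sum_nonneg path_prob_nonneg assms(1))
  moreover have "waiting_prob p Q (rev w) (n + 2) \<le> (\<Sum>x\<in>UNIV. p x * (1 - \<delta>) ^ (n div block_length))"
    using waiting_prob_Suc_Suc_le[of p "rev w" n] assms(1)
    by (simp add: order_trans[OF _ sum_mono[OF mult_left_mono[OF avoidance_prob_le_power]]])
  ultimately show ?thesis
    by (simp add: sum_distrib_right[symmetric] assms(2))
qed

lemma conv_radius_waiting_prob_ge: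
  assumes "\<And>u. 0 \<le> p u" and "(\<Sum>u\<in>UNIV. p u) = 1"
  shows "ereal (1 + radius_gap Q L \<epsilon> * path_prob p Q w) \<le> conv_radius (waiting_prob p Q (rev w))"
proof -
  have "p u \<le> 1" for u
    using member_le_sum[of u UNIV p] assms by simp
  then have "1 + radius_gap Q L \<epsilon> * path_prob p Q w \<le> 1 + \<delta> / block_length"
    using radius_gap_mult_path_prob_le assms(1) by simp
  also have "ereal (1 + \<delta> / block_length) \<le> conv_radius (\<lambda>n. waiting_prob p Q (rev w) (n + 2))"
    using occurrence_bound_pos[OF \<epsilon>_pos] occurrence_bound_lt_1[OF \<epsilon>_le_1] pattern_nonempty
    by (intro conv_radius_ge_of_block_decay waiting_prob_le_power assms) auto
  also have "\<dots> = conv_radius (waiting_prob p Q (rev w))"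
    by (rule conv_radius_shift)
  finally show ?thesis
    by simp
qed

end

text \<open>Invariance of p is used only through p being a probability vector.\<close>

theorem proposition2:
  fixes Q :: "nucl \<Rightarrow> nucl \<Rightarrow> real" and p :: "nucl \<Rightarrow> real"
  assumes "stochastic Q" and "irreducible_chain Q" and "aperiodic_chain Q"
    and "invariant_measure Q p"
  shows "\<exists>\<kappa>>0. \<forall>s :: nucl list. length s \<ge> 1 \<longrightarrow> word_prob p Q s > 0 \<longrightarrow>
           conv_radius (waiting_prob p Q s) \<ge> ereal (1 + \<kappa> * word_prob p Q s)"
proof -
  interpret ergodic_transition_matrix Q
    using assms(1-3) by unfold_locales
  obtain L \<epsilon> where \<epsilon>: "0 < \<epsilon>" "\<epsilon> \<le> 1"
    and window: "\<And>x y b M. \<epsilon> * (real M - real L) \<le> (\<Sum>k<M. mpow Q (b + k) x y)"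
    by (rule recurrence_window) blast
  have p: "\<And>u. 0 \<le> p u" "(\<Sum>u\<in>UNIV. p u) = 1"
    using assms(4) by (simp_all add: invariant_measure_def)
  have "ereal (1 + radius_gap Q L \<epsilon> * word_prob p Q s) \<le> conv_radius (waiting_prob p Q s)"
    if "length s \<ge> 1" and "word_prob p Q s > 0" for s
  proof -
    obtain a v where s: "rev s = a # v"
      using \<open>length s \<ge> 1\<close> by (cases "rev s") auto
    then have "0 < trans_prod Q a v"
      using \<open>word_prob p Q s > 0\<close> p(1) trans_prod_nonneg[of a v]
      by (auto simp: word_prob_def zero_less_mult_iff)
    then interpret recurrent_pattern Q "rev s" L \<epsilon>
      using s \<epsilon> window by unfold_locales simp_all
    show ?thesis
      using conv_radius_waiting_prob_ge[OF p] by (simp add: word_prob_def)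
  qed
  then show ?thesis
    using radius_gap_pos[OF \<open>0 < \<epsilon>\<close>] by blast
qed

end
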